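(* Let $T>0$, $K\ge2$, and let $h:\mathbb R^K\to\mathbb R^K$ be Lipschitz continuous. For $\mathbf y\in D^K[0,T]$ consider the integral equation $$\mathbf x(t)=\mathbf y(t)-\int_0^th(\mathbf x(s))\,ds-\Psi(\mathbf x,\mathbf y)(t)\,\mathbf I,\qquad t\in[0,T],$$ where $\Psi(\mathbf x,\mathbf y)(t)=\min_{1\le j\le K}\big\{y_j(t)-\int_0^th_j(\mathbf x(s))\,ds\big\}$ and $\mathbf I=(1,\dots,1)^\top$. Then for each $\mathbf y\in D^K[0,T]$ this equation has a unique solution $\mathbf x\in D^K[0,T]$, so that it defines a map $f:D^K[0,T]\to D^K[0,T]$, $f(\mathbf y)=\mathbf x$. Moreover $f$ is continuous when $D^K[0,T]$ is endowed with the topology of uniform convergence.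
   Context: $D^K[0,T]$ denotes the space of $\mathbb R^K$-valued functions on $[0,T]$ that are right-continuous with left limits; $h_j$ denotes the $j$th coordinate of $h$. *)

theory Defs
  imports "HOL-Analysis.Analysis"
begin

text \<open>Elements of D^K[0,T]: functions real => real^'k that are right-continuous
  on [0,T) and have left limits on (0,T]. Only the values on [0,T] matter.\<close>
definition cadlag :: "real \<Rightarrow> (real \<Rightarrow> real^'k) \<Rightarrow> bool" where
  "cadlag T x \<longleftrightarrow>
     (\<forall>t\<in>{0..<T}. continuous (at_right t) x) \<and>
     (\<forall>t\<in>{0<..T}. \<exists>l. (x \<longlongrightarrow> l) (at_left t))"

definition Psi :: "(real^'k \<Rightarrow> real^'k) \<Rightarrow> (real \<Rightarrow> real^'k) \<Rightarrow> (real \<Rightarrow> real^'k) \<Rightarrow> real \<Rightarrow> real" where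
  "Psi h x y t = Min (range (\<lambda>j. y t $ j - integral {0..t} (\<lambda>s. h (x s) $ j)))"

definition solves_eq :: "real \<Rightarrow> (real^'k \<Rightarrow> real^'k) \<Rightarrow> (real \<Rightarrow> real^'k) \<Rightarrow> (real \<Rightarrow> real^'k) \<Rightarrow> bool" where
  "solves_eq T h x y \<longleftrightarrow>
     (\<forall>t\<in>{0..T}. x t = y t - integral {0..t} (\<lambda>s. h (x s)) - Psi h x y t *\<^sub>R (\<chi> j. 1))"

end

theory Submission
  imports Defs
begin

(*
  Write Phi z = z - (min_j z_j) 1. Since the minimum of the coordinates is 1-Lipschitz, Phi is
  Lipschitz, and x solves the equation iff x(t) = Phi (y(t) - \<integral>\<^sub>0\<^sup>t h(x(s)) ds) on [0,T].
  For two solutions, Gronwall's inequality bounds |x' - x| by a constant times sup |y' - y|; this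
  gives uniqueness and the (even Lipschitz) continuity of the solution map in the uniform topology.
  Existence follows from Banach's fixed point theorem in an exponentially weighted supremum norm.
  Cadlag functions are bounded and integrable (they are uniform limits of step functions), which
  makes all the integrals meaningful.
*)

section \<open>Cadlag functions on an interval\<close>

definition cadlag_on :: "real \<Rightarrow> real \<Rightarrow> (real \<Rightarrow> 'a::topological_space) \<Rightarrow> bool" where
  "cadlag_on a b f \<longleftrightarrow>
     (\<forall>t\<in>{a..<b}. continuous (at_right t) f) \<and> (\<forall>t\<in>{a<..b}. \<exists>l. (f \<longlongrightarrow> l) (at_left t))"

lemma cadlag_iff_cadlag_on: "cadlag T x = cadlag_on 0 T x"
  unfolding cadlag_def cadlag_on_def by simp

lemma cadlag_on_right_approx:
  fixes f :: "real \<Rightarrow> 'a::real_normed_vector"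
  assumes "cadlag_on a b f" "e > 0" "x \<in> {a..b}"
  shows "\<exists>d>0. \<forall>s\<in>{a..b}. \<bar>s - x\<bar> < d \<longrightarrow> x \<le> s \<longrightarrow> norm (f s - f x) \<le> e"
proof (cases "x < b")
  case True
  then have "continuous (at_right x) f"
    using assms unfolding cadlag_on_def by auto
  then have "(f \<longlongrightarrow> f x) (at_right x)"
    by (simp add: continuous_within)
  then have "eventually (\<lambda>s. dist (f s) (f x) < e) (at_right x)"
    using assms(2) tendstoD by blast
  then obtain d where d: "d > 0" "\<And>s. s \<in> {x<..} \<Longrightarrow> s \<noteq> x \<Longrightarrow> dist s x < d \<Longrightarrow> dist (f s) (f x) < e"
    unfolding eventually_at by blast
  show ?thesis
  proof (intro exI[of _ d] conjI ballI impI)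
    fix s assume "s \<in> {a..b}" "\<bar>s - x\<bar> < d" "x \<le> s"
    then show "norm (f s - f x) \<le> e"
      using d(2)[of s] assms(2) by (cases "s = x") (auto simp: dist_norm dist_real_def)
  qed (use d in auto)
next
  case False
  then show ?thesis
    using assms(2,3) by (intro exI[of _ 1]) auto
qed

lemma cadlag_on_left_approx:
  fixes f :: "real \<Rightarrow> 'a::real_normed_vector"
  assumes "cadlag_on a b f" "e > 0" "x \<in> {a..b}"
  shows "\<exists>d>0. \<exists>l. \<forall>s\<in>{a..b}. \<bar>s - x\<bar> < d \<longrightarrow> s < x \<longrightarrow> norm (f s - l) \<le> e"
proof (cases "a < x")
  case True
  then have "x \<in> {a<..b}"
    using assms(3) by auto
  then obtain l where "(f \<longlongrightarrow> l) (at_left x)"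
    using assms(1) unfolding cadlag_on_def by blast
  then have "eventually (\<lambda>s. dist (f s) l < e) (at_left x)"
    using assms(2) tendstoD by blast
  then obtain d where d: "d > 0" "\<And>s. s \<in> {..<x} \<Longrightarrow> s \<noteq> x \<Longrightarrow> dist s x < d \<Longrightarrow> dist (f s) l < e"
    unfolding eventually_at by blast
  show ?thesis
  proof (intro exI[of _ d] conjI exI[of _ l] ballI impI)
    fix s assume "s \<in> {a..b}" "\<bar>s - x\<bar> < d" "s < x"
    then show "norm (f s - l) \<le> e"
      using d(2)[of s] by (auto simp: dist_norm dist_real_def)
  qed (use d in auto)
next
  case False
  then show ?thesis
    using assms(2,3) by (intro exI[of _ 1]) auto
qed

lemma cadlag_on_local_approx:
  fixes f :: "real \<Rightarrow> 'a::real_normed_vector"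
  assumes "cadlag_on a b f" "e > 0" "x \<in> {a..b}"
  shows "\<exists>d>0. \<exists>l. \<forall>s\<in>{a..b}. \<bar>s - x\<bar> < d \<longrightarrow>
           (s < x \<longrightarrow> norm (f s - l) \<le> e) \<and> (x \<le> s \<longrightarrow> norm (f s - f x) \<le> e)"
proof -
  obtain d1 where d1: "d1 > 0"
    "\<And>s. s \<in> {a..b} \<Longrightarrow> \<bar>s - x\<bar> < d1 \<Longrightarrow> x \<le> s \<Longrightarrow> norm (f s - f x) \<le> e"
    using cadlag_on_right_approx[OF assms] by blast
  obtain d2 l where d2: "d2 > 0"
    "\<And>s. s \<in> {a..b} \<Longrightarrow> \<bar>s - x\<bar> < d2 \<Longrightarrow> s < x \<Longrightarrow> norm (f s - l) \<le> e"
    using cadlag_on_left_approx[OF assms] by blast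
  show ?thesis
  proof (intro exI[of _ "min d1 d2"] conjI exI[of _ l] ballI impI)
    fix s assume "s \<in> {a..b}" "\<bar>s - x\<bar> < min d1 d2"
    then show "s < x \<Longrightarrow> norm (f s - l) \<le> e" "x \<le> s \<Longrightarrow> norm (f s - f x) \<le> e"
      using d1(2)[of s] d2(2)[of s] by auto
  qed (use d1 d2 in auto)
qed

lemma cadlag_on_approx_gauge:
  fixes f :: "real \<Rightarrow> 'a::real_normed_vector"
  assumes "cadlag_on a b f" "e > 0"
  obtains d L where "\<And>x. d x > 0"
    "\<And>x s. x \<in> {a..b} \<Longrightarrow> s \<in> {a..b} \<Longrightarrow> \<bar>s - x\<bar> < d x \<Longrightarrow> s < x \<Longrightarrow> norm (f s - L x) \<le> e"
    "\<And>x s. x \<in> {a..b} \<Longrightarrow> s \<in> {a..b} \<Longrightarrow> \<bar>s - x\<bar> < d x \<Longrightarrow> x \<le> s \<Longrightarrow> norm (f s - f x) \<le> e"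
proof -
  have "\<forall>x. \<exists>d>0. \<exists>l. x \<in> {a..b} \<longrightarrow> (\<forall>s\<in>{a..b}. \<bar>s - x\<bar> < d \<longrightarrow>
          (s < x \<longrightarrow> norm (f s - l) \<le> e) \<and> (x \<le> s \<longrightarrow> norm (f s - f x) \<le> e))"
  proof
    fix x
    show "\<exists>d>0. \<exists>l. x \<in> {a..b} \<longrightarrow> (\<forall>s\<in>{a..b}. \<bar>s - x\<bar> < d \<longrightarrow>
            (s < x \<longrightarrow> norm (f s - l) \<le> e) \<and> (x \<le> s \<longrightarrow> norm (f s - f x) \<le> e))"
      using cadlag_on_local_approx[OF assms, of x] zero_less_one by (cases "x \<in> {a..b}") blast+
  qed
  then obtain d L where "\<And>x. d x > 0" "\<And>x. x \<in> {a..b} \<longrightarrow> (\<forall>s\<in>{a..b}. \<bar>s - x\<bar> < d x \<longrightarrow>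
      (s < x \<longrightarrow> norm (f s - L x) \<le> e) \<and> (x \<le> s \<longrightarrow> norm (f s - f x) \<le> e))"
    by metis
  then show ?thesis
    using that by blast
qed

lemma cadlag_on_integrable:
  fixes f :: "real \<Rightarrow> 'a::banach"
  assumes "cadlag_on a b f"
  shows "f integrable_on {a..b}"
proof -
  have "f integrable_on cbox a b"
  proof (rule integrable_uniform_limit)
    fix e :: real assume e: "e > 0"
    obtain d L where d: "\<And>x. d x > 0"
      and dl: "\<And>x s. x \<in> {a..b} \<Longrightarrow> s\<in>{a..b} \<Longrightarrow> \<bar>s - x\<bar> < d x \<Longrightarrow> s < x \<Longrightarrow> norm (f s - L x) \<le> e"
      and dr: "\<And>x s. x \<in> {a..b} \<Longrightarrow> s\<in>{a..b} \<Longrightarrow> \<bar>s - x\<bar> < d x \<Longrightarrow> x \<le> s \<Longrightarrow> norm (f s - f x) \<le> e"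
      using cadlag_on_approx_gauge[OF assms e] by blast
    obtain p where ptag: "p tagged_division_of cbox a b" and fine: "(\<lambda>x. ball x (d x)) fine p"
      using fine_division_exists[OF gauge_ball_dependent, of d a b] d by blast
    have *: "\<forall>i\<in>snd ` p. \<exists>g. (\<forall>x\<in>i. norm (f x - g x) \<le> e) \<and> g integrable_on i"
    proof clarsimp
      fix x K assume xK: "(x, K) \<in> p"
      obtain u v where K: "K = cbox u v" using xK ptag by blast
      have xin: "x \<in> K" "K \<subseteq> cbox a b" using xK ptag by (auto dest: tagged_division_ofD)
      have Kb: "K \<subseteq> ball x (d x)" using fine xK by (auto dest: fineD)
      let ?g = "\<lambda>s. if s < x then L x else f x"
      show "\<exists>g. (\<forall>s\<in>K. norm (f s - g s) \<le> e) \<and> g integrable_on K"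
      proof (intro exI conjI ballI)
        fix s assume s: "s \<in> K"
        then have "s \<in> {a..b}" "x \<in> {a..b}" "\<bar>s - x\<bar> < d x" using xin Kb
          by (auto simp: dist_real_def abs_minus_commute)
        then show "norm (f s - ?g s) \<le> e" using dl dr by auto
      next
        have ux: "u \<le> x" "x \<le> v" using xin(1) K by auto
        have i1: "?g integrable_on {u..x}"
          by (rule integrable_spike_finite[where S="{x}" and f="\<lambda>s. L x"]) auto
        have i2: "?g integrable_on {x..v}"
          by (rule integrable_spike_finite[where S="{}" and f="\<lambda>s. f x"]) auto
        show "?g integrable_on K"
          using Henstock_Kurzweil_Integration.integrable_combine[OF ux i1 i2] K by simp
      qed
    qed
    from e have "e \<ge> 0" by auto
    from approximable_on_division[OF this division_of_tagged_division[OF ptag] *]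
    show "\<exists>g. (\<forall>x\<in>cbox a b. norm (f x - g x) \<le> e) \<and> g integrable_on cbox a b"
      by metis
  qed
  then show ?thesis by simp
qed

lemma cadlag_on_bounded:
  fixes f :: "real \<Rightarrow> 'a::real_normed_vector"
  assumes "cadlag_on a b f"
  shows "\<exists>M. \<forall>t\<in>{a..b}. norm (f t) \<le> M"
proof -
  obtain d L where d: "\<And>x. d x > 0"
    and dl: "\<And>x s. x \<in> {a..b} \<Longrightarrow> s\<in>{a..b} \<Longrightarrow> \<bar>s - x\<bar> < d x \<Longrightarrow> s < x \<Longrightarrow> norm (f s - L x) \<le> 1"
    and dr: "\<And>x s. x \<in> {a..b} \<Longrightarrow> s\<in>{a..b} \<Longrightarrow> \<bar>s - x\<bar> < d x \<Longrightarrow> x \<le> s \<Longrightarrow> norm (f s - f x) \<le> 1"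
    using cadlag_on_approx_gauge[OF assms, of 1] by auto
  obtain p where ptag: "p tagged_division_of cbox a b" and fine: "(\<lambda>x. ball x (d x)) fine p"
    using fine_division_exists[OF gauge_ball_dependent, of d a b] d by blast
  let ?M = "\<Sum>(x,K)\<in>p. norm (L x) + norm (f x) + 1"
  show ?thesis
  proof (intro exI ballI)
    fix t assume t: "t \<in> {a..b}"
    then have "t \<in> \<Union>{K. \<exists>x. (x, K) \<in> p}" using tagged_division_ofD(6)[OF ptag] by auto
    then obtain x K where xK: "(x, K) \<in> p" "t \<in> K" by blast
    have xin: "x \<in> K" "K \<subseteq> cbox a b" using xK ptag by (auto dest: tagged_division_ofD)
    have Kb: "K \<subseteq> ball x (d x)" using fine xK by (auto dest: fineD)
    have ab: "t \<in> {a..b}" "x \<in> {a..b}" "\<bar>t - x\<bar> < d x" using xin Kb xK(2)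
      by (auto simp: dist_real_def abs_minus_commute)
    have "norm (f t) \<le> norm (L x) + norm (f x) + 1"
    proof (cases "t < x")
      case True
      then have "norm (f t - L x) \<le> 1" using dl ab by auto
      then show ?thesis
        by (smt (verit) norm_ge_zero norm_minus_commute norm_triangle_ineq2)
    next
      case False
      then have "norm (f t - f x) \<le> 1" using dr ab by auto
      then show ?thesis by (smt (verit) norm_ge_zero norm_triangle_ineq2)
    qed
    also have "\<dots> \<le> ?M"
      using member_le_sum[of "(x,K)" p "\<lambda>(x,K). norm (L x) + norm (f x) + 1"] xK(1) tagged_division_of_finite[OF ptag]
      by (auto simp: add_nonneg_nonneg)
    finally show "norm (f t) \<le> ?M" .
  qed
qed

lemma cadlag_on_Pair: "cadlag_on a b f \<Longrightarrow> cadlag_on a b g \<Longrightarrow> cadlag_on a b (\<lambda>s. (f s, g s))"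
  unfolding cadlag_on_def
proof (intro conjI ballI, goal_cases)
  case (1 t)
  then show ?case by (simp add: continuous_Pair)
next
  case (2 t)
  then obtain l1 l2 where "(f \<longlongrightarrow> l1) (at_left t)" "(g \<longlongrightarrow> l2) (at_left t)" by blast
  then show ?case by (blast intro: tendsto_Pair)
qed

lemma cadlag_on_compose:
  fixes G :: "'a::t2_space \<Rightarrow> 'b::t2_space"
  assumes "cadlag_on a b f" "continuous_on UNIV G"
  shows "cadlag_on a b (\<lambda>s. G (f s))"
proof -
  have c: "isCont G z" for z using assms(2) by (simp add: continuous_on_eq_continuous_at)
  show ?thesis using assms(1) unfolding cadlag_on_def
  proof (intro conjI ballI, goal_cases)
    case (1 t)
    then show ?case using c continuous_within_compose3 by blast
  next
    case (2 t)
    then obtain l where "(f \<longlongrightarrow> l) (at_left t)" by blast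
    then show ?case using c isCont_tendsto_compose by blast
  qed
qed

lemma continuous_imp_cadlag_on:
  assumes "continuous_on UNIV u"
  shows "cadlag_on a b u"
proof -
  have c: "isCont u z" for z using assms by (simp add: continuous_on_eq_continuous_at)
  show ?thesis unfolding cadlag_on_def
  proof (intro conjI ballI)
    fix t show "continuous (at_right t) u" using c continuous_at_imp_continuous_at_within by blast
    show "\<exists>l. (u \<longlongrightarrow> l) (at_left t)"
      using c[of t] by (metis isCont_def tendsto_within_subset subset_UNIV)
  qed
qed

lemma cadlag_on_integrable_subinterval:
  fixes f :: "real \<Rightarrow> 'a::banach"
  shows "cadlag_on a b f \<Longrightarrow> t \<in> {a..b} \<Longrightarrow> f integrable_on {a..t}"
  using cadlag_on_integrable integrable_on_subinterval
  by (metis atLeastAtMost_iff atLeastatMost_subset_iff order_refl)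

lemma cadlag_on_norm_diff:
  fixes x x' :: "real \<Rightarrow> 'a::real_normed_vector"
  assumes "cadlag_on a b x" "cadlag_on a b x'"
  shows "cadlag_on a b (\<lambda>s. norm (x' s - x s))"
proof -
  have "continuous_on UNIV (\<lambda>p::'a \<times> 'a. norm (fst p - snd p))"
    by (intro continuous_intros)
  from cadlag_on_compose[OF cadlag_on_Pair[OF assms(2,1)] this] show ?thesis
    by simp
qed

section \<open>A Gronwall inequality\<close>

lemma has_integral_exp_scaled:
  fixes c r :: real
  assumes "c > 0" "r \<ge> 0"
  shows "((\<lambda>s. exp (c * s)) has_integral (exp (c * r) - 1) / c) {0..r}"
proof -
  have "((\<lambda>s. exp (c * s)) has_integral (exp (c * r) / c - exp (c * 0) / c)) {0..r}"
  proof (rule fundamental_theorem_of_calculus[OF assms(2)])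
    fix s :: real
    have "((\<lambda>s. exp (c * s) / c) has_real_derivative exp (c * s)) (at s within {0..r})"
      using assms(1) by (auto intro!: derivative_eq_intros)
    then show "((\<lambda>s. exp (c * s) / c) has_vector_derivative exp (c * s)) (at s within {0..r})"
      by (simp add: has_real_derivative_iff_has_vector_derivative)
  qed
  then show ?thesis
    by (simp add: diff_divide_distrib)
qed

text \<open>With the weight \<open>exp (-2 B t)\<close>, the integral term contributes at most half of the
  weighted supremum \<open>S\<close>, so \<open>S \<le> a + S / 2\<close>; boundedness makes \<open>S\<close> finite.\<close>
lemma gronwall_bounded:
  fixes \<phi> :: "real \<Rightarrow> real"
  assumes B: "B > 0" and a: "a \<ge> 0" and T: "T \<ge> 0"
    and nonneg: "\<And>t. t \<in> {0..T} \<Longrightarrow> 0 \<le> \<phi> t"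
    and integrable: "\<phi> integrable_on {0..T}"
    and bounded: "\<And>t. t \<in> {0..T} \<Longrightarrow> \<phi> t \<le> M"
    and ineq: "\<And>t. t \<in> {0..T} \<Longrightarrow> \<phi> t \<le> a + B * integral {0..t} \<phi>"
    and t: "t \<in> {0..T}"
  shows "\<phi> t \<le> 2 * a * exp (2 * B * t)"
proof -
  define \<psi> where "\<psi> t = \<phi> t * exp (-(2 * B * t))" for t
  define S where "S = Sup (\<psi> ` {0..T})"
  have bdd: "bdd_above (\<psi> ` {0..T})"
  proof (rule bdd_aboveI2)
    fix t assume t: "t \<in> {0..T}"
    have "exp (-(2 * B * t)) \<le> 1"
      using B t by auto
    then show "\<psi> t \<le> M"
      unfolding \<psi>_def using nonneg[OF t] bounded[OF t] by (smt (verit) mult_left_le)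
  qed
  have \<psi>_le_S: "\<psi> t \<le> S" if "t \<in> {0..T}" for t
    unfolding S_def using bdd that by (rule cSUP_upper2) auto
  have S_nonneg: "S \<ge> 0"
    using \<psi>_le_S[of 0] nonneg[of 0] T by (auto simp: \<psi>_def)
  have \<phi>_le: "\<phi> t \<le> S * exp (2 * B * t)" if "t \<in> {0..T}" for t
  proof -
    have "\<phi> t = \<psi> t * exp (2 * B * t)"
      unfolding \<psi>_def by (simp add: mult.assoc flip: exp_add)
    also have "\<dots> \<le> S * exp (2 * B * t)"
      using \<psi>_le_S[OF that] by simp
    finally show ?thesis .
  qed
  have \<psi>_le: "\<psi> t \<le> a + S / 2" if t: "t \<in> {0..T}" for t
  proof -
    have "integral {0..t} \<phi> \<le> S * ((exp (2 * B * t) - 1) / (2 * B))"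
    proof (rule has_integral_le[OF integrable_integral])
      show "\<phi> integrable_on {0..t}"
        using integrable_on_subinterval[OF integrable, of 0 t] t by auto
      show "((\<lambda>s. S * exp (2 * B * s)) has_integral S * ((exp (2 * B * t) - 1) / (2 * B))) {0..t}"
        using has_integral_mult_right[OF has_integral_exp_scaled[of "2 * B" t]] B t by auto
    qed (use \<phi>_le t in auto)
    then have "\<phi> t \<le> a + B * (S * ((exp (2 * B * t) - 1) / (2 * B)))"
      using ineq[OF t] B by (smt (verit) mult_left_mono)
    also have "\<dots> = a + S * (exp (2 * B * t) - 1) / 2"
      using B by (simp add: field_simps)
    finally have "\<psi> t \<le> (a + S * (exp (2 * B * t) - 1) / 2) * exp (-(2 * B * t))"
      unfolding \<psi>_def by (simp add: mult_right_mono)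
    also have "\<dots> = a * exp (-(2 * B * t)) + S / 2 - S / 2 * exp (-(2 * B * t))"
      by (simp add: field_simps exp_minus_inverse)
    also have "\<dots> \<le> a + S / 2"
    proof -
      have "exp (-(2 * B * t)) \<le> 1"
        using B t by auto
      then have "a * exp (-(2 * B * t)) \<le> a"
        using a by (simp add: mult_left_le)
      moreover have "S / 2 * exp (-(2 * B * t)) \<ge> 0"
        using S_nonneg by simp
      ultimately show ?thesis
        by linarith
    qed
    finally show ?thesis .
  qed
  have "S \<le> a + S / 2"
    unfolding S_def by (rule cSUP_least) (use \<psi>_le T in \<open>auto simp: S_def\<close>)
  then have "S \<le> 2 * a"
    by linarith
  then show ?thesis
    using \<phi>_le[OF t] by (smt (verit) exp_gt_zero mult_right_mono)
qed

section \<open>The minimum shift\<close>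

definition min_coord :: "real^'k \<Rightarrow> real" where
  "min_coord z = Min (range (\<lambda>j. z $ j))"

definition shift_by_min :: "real^'k \<Rightarrow> real^'k" where
  "shift_by_min z = z - min_coord z *\<^sub>R (\<chi> j. 1)"

lemma min_coord_le: "min_coord z \<le> z $ j"
  unfolding min_coord_def by (rule Min_le) auto

lemma min_coord_attained: "\<exists>j. min_coord z = z $ j"
proof -
  have "min_coord z \<in> range (\<lambda>j. z $ j)"
    unfolding min_coord_def by (rule Min_in) auto
  then show ?thesis
    by auto
qed

lemma min_coord_lipschitz: "\<bar>min_coord z - min_coord w\<bar> \<le> norm (z - w)"
proof -
  have le: "min_coord z \<le> min_coord w + norm (z - w)" for z w :: "real^'k"
  proof -
    obtain j where j: "min_coord w = w $ j"
      using min_coord_attained by blast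
    have "min_coord z \<le> z $ j"
      by (rule min_coord_le)
    also have "\<dots> \<le> w $ j + norm (z - w)"
      using component_le_norm_cart[of "z - w" j] by auto
    finally show ?thesis
      using j by simp
  qed
  show ?thesis
    using le[of z w] le[of w z] by (simp add: norm_minus_commute abs_le_iff)
qed

lemma lipschitz_on_shift_by_min:
  "lipschitz_on (1 + norm (\<chi> j. 1 :: real^'k)) UNIV (shift_by_min :: real^'k \<Rightarrow> real^'k)"
proof (rule lipschitz_onI)
  fix z w :: "real^'k"
  have "shift_by_min z - shift_by_min w = (z - w) - (min_coord z - min_coord w) *\<^sub>R (\<chi> j. 1)"
    unfolding shift_by_min_def by (simp add: algebra_simps)
  then have "norm (shift_by_min z - shift_by_min w) \<le>
      norm (z - w) + \<bar>min_coord z - min_coord w\<bar> * norm (\<chi> j. 1 :: real^'k)"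
    by (metis norm_scaleR norm_triangle_ineq4)
  also have "\<dots> \<le> norm (z - w) + norm (z - w) * norm (\<chi> j. 1 :: real^'k)"
    using min_coord_lipschitz[of z w] by (simp add: mult_right_mono)
  finally show "dist (shift_by_min z) (shift_by_min w) \<le> (1 + norm (\<chi> j. 1 :: real^'k)) * dist z w"
    by (simp add: dist_norm algebra_simps)
qed simp

lemma solves_eq_iff_shift_by_min:
  assumes "\<And>t. t \<in> {0..T} \<Longrightarrow> (\<lambda>s. h (x s)) integrable_on {0..t}"
  shows "solves_eq T h x y \<longleftrightarrow>
           (\<forall>t\<in>{0..T}. x t = shift_by_min (y t - integral {0..t} (\<lambda>s. h (x s))))"
proof -
  have "Psi h x y t = min_coord (y t - integral {0..t} (\<lambda>s. h (x s)))" if "t \<in> {0..T}" for t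
    unfolding Psi_def min_coord_def using assms[OF that] by simp
  then show ?thesis
    unfolding solves_eq_def shift_by_min_def by auto
qed

section \<open>Integral equations with Lipschitz data\<close>

locale lipschitz_integral_equation =
  fixes Phi h :: "'a::banach \<Rightarrow> 'a" and C L T :: real
  assumes lipschitz_Phi: "lipschitz_on C UNIV Phi"
    and lipschitz_h: "lipschitz_on L UNIV h"
    and T_nonneg: "0 \<le> T"
begin

definition solves :: "(real \<Rightarrow> 'a) \<Rightarrow> (real \<Rightarrow> 'a) \<Rightarrow> bool" where
  "solves x y \<longleftrightarrow> (\<forall>t\<in>{0..T}. x t = Phi (y t - integral {0..t} (\<lambda>s. h (x s))))"

definition rate :: real where
  "rate = C * L + 1"

lemma C_nonneg: "0 \<le> C"
  using lipschitz_Phi lipschitz_on_nonneg by blast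

lemma L_nonneg: "0 \<le> L"
  using lipschitz_h lipschitz_on_nonneg by blast

lemma rate_pos: "0 < rate"
  unfolding rate_def using C_nonneg L_nonneg by (simp add: add_nonneg_pos)

lemma cadlag_on_h_comp: "cadlag_on 0 T x \<Longrightarrow> cadlag_on 0 T (\<lambda>s. h (x s))"
  using cadlag_on_compose lipschitz_h lipschitz_on_continuous_on by blast

lemma integrable_h_comp: "cadlag_on 0 T x \<Longrightarrow> t \<in> {0..T} \<Longrightarrow> (\<lambda>s. h (x s)) integrable_on {0..t}"
  using cadlag_on_h_comp cadlag_on_integrable_subinterval by blast

lemma solutions_difference_ineq:
  assumes x: "cadlag_on 0 T x" "solves x y" and x': "cadlag_on 0 T x'" "solves x' y'"
    and y: "norm (y' t - y t) \<le> \<delta>" and t: "t \<in> {0..T}"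
  shows "norm (x' t - x t) \<le> C * \<delta> + rate * integral {0..t} (\<lambda>s. norm (x' s - x s))"
proof -
  let ?I = "integral {0..t} (\<lambda>s. h (x s))" and ?I' = "integral {0..t} (\<lambda>s. h (x' s))"
  let ?\<phi> = "\<lambda>s. norm (x' s - x s)"
  have int\<phi>: "?\<phi> integrable_on {0..t}"
    using cadlag_on_norm_diff[OF x(1) x'(1)] t by (rule cadlag_on_integrable_subinterval)
  have "norm (?I' - ?I) = norm (integral {0..t} (\<lambda>s. h (x' s) - h (x s)))"
    using integral_diff[OF integrable_h_comp[OF x'(1) t] integrable_h_comp[OF x(1) t]] by simp
  also have "\<dots> \<le> integral {0..t} (\<lambda>s. L * ?\<phi> s)"
  proof (rule integral_norm_bound_integral)
    show "(\<lambda>s. h (x' s) - h (x s)) integrable_on {0..t}"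
      using integrable_h_comp[OF x'(1) t] integrable_h_comp[OF x(1) t] by (rule integrable_diff)
    show "(\<lambda>s. L * ?\<phi> s) integrable_on {0..t}"
      using integrable_on_cmult_left[OF int\<phi>, of L] by simp
    show "norm (h (x' s) - h (x s)) \<le> L * ?\<phi> s" for s
      using lipschitz_onD[OF lipschitz_h, of "x' s" "x s"] by (simp add: dist_norm)
  qed
  finally have I_diff: "norm (?I' - ?I) \<le> L * integral {0..t} ?\<phi>"
    by simp
  have int_nonneg: "integral {0..t} ?\<phi> \<ge> 0"
    using int\<phi> by (rule integral_nonneg) simp
  have "(y' t - ?I') - (y t - ?I) = (y' t - y t) - (?I' - ?I)"
    by (simp add: algebra_simps)
  then have "norm ((y' t - ?I') - (y t - ?I)) \<le> norm (y' t - y t) + norm (?I' - ?I)"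
    by (metis norm_triangle_ineq4)
  also have "\<dots> \<le> \<delta> + L * integral {0..t} ?\<phi>"
    using y I_diff by linarith
  finally have arg_diff: "norm ((y' t - ?I') - (y t - ?I)) \<le> \<delta> + L * integral {0..t} ?\<phi>" .
  have "norm (x' t - x t) = norm (Phi (y' t - ?I') - Phi (y t - ?I))"
    using x(2) x'(2) t unfolding solves_def by simp
  also have "\<dots> \<le> C * norm ((y' t - ?I') - (y t - ?I))"
    using lipschitz_onD[OF lipschitz_Phi, of "y' t - ?I'" "y t - ?I"] by (simp add: dist_norm)
  also have "\<dots> \<le> C * (\<delta> + L * integral {0..t} ?\<phi>)"
    using arg_diff C_nonneg by (rule mult_left_mono)
  also have "\<dots> \<le> C * \<delta> + rate * integral {0..t} ?\<phi>"
    using int_nonneg unfolding rate_def by (simp add: algebra_simps)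
  finally show ?thesis .
qed

lemma solution_stability:
  assumes x: "cadlag_on 0 T x" "solves x y" and x': "cadlag_on 0 T x'" "solves x' y'"
    and y: "\<forall>t\<in>{0..T}. norm (y' t - y t) \<le> \<delta>" and t: "t \<in> {0..T}"
  shows "norm (x' t - x t) \<le> 2 * C * \<delta> * exp (2 * rate * T)"
proof -
  let ?\<phi> = "\<lambda>s. norm (x' s - x s)"
  have \<phi>: "cadlag_on 0 T ?\<phi>"
    using x(1) x'(1) by (rule cadlag_on_norm_diff)
  obtain M where M: "\<forall>s\<in>{0..T}. norm (?\<phi> s) \<le> M"
    using cadlag_on_bounded[OF \<phi>] by blast
  have "\<delta> \<ge> 0"
    using y t by (blast intro: order_trans[OF norm_ge_zero])
  have "?\<phi> t \<le> 2 * (C * \<delta>) * exp (2 * rate * t)"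
  proof (rule gronwall_bounded[OF rate_pos _ T_nonneg _ cadlag_on_integrable[OF \<phi>] _ _ t])
    show "0 \<le> C * \<delta>"
      using C_nonneg \<open>\<delta> \<ge> 0\<close> by simp
    show "?\<phi> s \<le> M" if "s \<in> {0..T}" for s
      using M that by simp
    show "?\<phi> s \<le> C * \<delta> + rate * integral {0..s} ?\<phi>" if "s \<in> {0..T}" for s
      using y that by (intro solutions_difference_ineq[OF x x']) auto
  qed simp
  also have "\<dots> \<le> 2 * C * \<delta> * exp (2 * rate * T)"
    using mult_left_mono[of "exp (2 * rate * t)" "exp (2 * rate * T)" "2 * C * \<delta>"]
      C_nonneg rate_pos t \<open>\<delta> \<ge> 0\<close> by simp
  finally show ?thesis .
qed

lemma solution_unique:
  assumes "cadlag_on 0 T x" "solves x y" "cadlag_on 0 T x'" "solves x' y" "t \<in> {0..T}"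
  shows "x' t = x t"
  using solution_stability[OF assms(1-4), of 0] assms(5) by simp

lemma solution_continuous_dependence:
  assumes "\<epsilon> > 0"
  obtains \<delta> where "\<delta> > 0"
    and "\<And>x y x' y' t. cadlag_on 0 T x \<Longrightarrow> solves x y \<Longrightarrow> cadlag_on 0 T x' \<Longrightarrow> solves x' y' \<Longrightarrow>
           \<forall>s\<in>{0..T}. norm (y' s - y s) \<le> \<delta> \<Longrightarrow> t \<in> {0..T} \<Longrightarrow> norm (x' t - x t) \<le> \<epsilon>"
proof
  define K where "K = 2 * (C + 1) * exp (2 * rate * T)"
  have K: "K > 0"
    unfolding K_def using C_nonneg by simp
  show "\<epsilon> / K > 0"
    using assms K by simp
  fix x y x' y' t
  assume "cadlag_on 0 T x" "solves x y" "cadlag_on 0 T x'" "solves x' y'"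
    and y: "\<forall>s\<in>{0..T}. norm (y' s - y s) \<le> \<epsilon> / K" and "t \<in> {0..T}"
  then have "norm (x' t - x t) \<le> 2 * C * (\<epsilon> / K) * exp (2 * rate * T)"
    by (intro solution_stability)
  also have "\<dots> = 2 * C * exp (2 * rate * T) * (\<epsilon> / K)"
    by (simp add: ac_simps)
  also have "\<dots> \<le> K * (\<epsilon> / K)"
    using assms K by (intro mult_right_mono) (simp_all add: K_def)
  also have "\<dots> = \<epsilon>"
    using K by simp
  finally show "norm (x' t - x t) \<le> \<epsilon>" .
qed

text \<open>Existence is a Banach fixed point argument for the unknown
  \<open>v t = exp (-2 rate t) * \<integral>\<^sub>0\<^sup>t h (x s) ds\<close>, from which the solution is recovered as
  \<open>x = candidate y v\<close>. The exponential weight turns the Picard map into a contraction with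
  constant \<open>1/2\<close> for the supremum norm; clamping extends it to a bounded continuous function on
  the whole real line.\<close>

definition candidate :: "(real \<Rightarrow> 'a) \<Rightarrow> (real \<Rightarrow>\<^sub>C 'a) \<Rightarrow> real \<Rightarrow> 'a" where
  "candidate y v s = Phi (y s - exp (2 * rate * s) *\<^sub>R v s)"

definition weighted_integral :: "(real \<Rightarrow> 'a) \<Rightarrow> (real \<Rightarrow>\<^sub>C 'a) \<Rightarrow> real \<Rightarrow> 'a" where
  "weighted_integral y v r = exp (-(2 * rate * r)) *\<^sub>R integral {0..r} (\<lambda>s. h (candidate y v s))"

definition picard :: "(real \<Rightarrow> 'a) \<Rightarrow> (real \<Rightarrow>\<^sub>C 'a) \<Rightarrow> (real \<Rightarrow>\<^sub>C 'a)" where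
  "picard y v = Bcontfun (\<lambda>t. weighted_integral y v (clamp 0 T t))"

lemma cadlag_on_candidate:
  assumes "cadlag_on 0 T y"
  shows "cadlag_on 0 T (candidate y v)"
proof -
  have "continuous_on UNIV (\<lambda>s. exp (2 * rate * s) *\<^sub>R v s)"
    by (intro continuous_intros) auto
  then have "cadlag_on 0 T (\<lambda>s. (y s, exp (2 * rate * s) *\<^sub>R v s))"
    by (rule cadlag_on_Pair[OF assms continuous_imp_cadlag_on])
  moreover have "continuous_on UNIV (\<lambda>p. Phi (fst p - snd p))"
    using lipschitz_on_continuous_on[OF lipschitz_Phi]
    by (rule continuous_on_compose2) (auto intro!: continuous_on_diff continuous_on_fst continuous_on_snd continuous_on_id)
  ultimately show ?thesis
    unfolding candidate_def using cadlag_on_compose by fastforce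
qed

lemma continuous_on_weighted_integral:
  assumes "cadlag_on 0 T y"
  shows "continuous_on {0..T} (weighted_integral y v)"
  unfolding weighted_integral_def
  using cadlag_on_integrable[OF cadlag_on_h_comp[OF cadlag_on_candidate[OF assms]]]
  by (intro continuous_intros indefinite_integral_continuous_1)

lemma clamp_in_interval_real: "clamp 0 T t \<in> {0..T}"
  using clamp_in_interval[of 0 T t] T_nonneg by simp

lemma picard_apply:
  assumes "cadlag_on 0 T y"
  shows "picard y v t = weighted_integral y v (clamp 0 T t)"
proof -
  obtain g :: "real \<Rightarrow>\<^sub>C 'a" where g: "\<And>t. g t = weighted_integral y v (clamp 0 T t)"
    using continuous_on_cbox_bcontfunE[of 0 T "weighted_integral y v"]
      continuous_on_weighted_integral[OF assms] by auto
  then have "(\<lambda>t. weighted_integral y v (clamp 0 T t)) = apply_bcontfun g"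
    by auto
  then have "picard y v = g"
    unfolding picard_def by (simp add: apply_bcontfun_inverse)
  then show ?thesis
    by (simp only: g)
qed

lemma h_candidate_diff_le:
  "norm (h (candidate y v s) - h (candidate y w s)) \<le> L * C * dist v w * exp (2 * rate * s)"
proof -
  have "norm (h (candidate y v s) - h (candidate y w s)) \<le> L * norm (candidate y v s - candidate y w s)"
    using lipschitz_onD[OF lipschitz_h] by (simp add: dist_norm)
  also have "\<dots> \<le> L * (C * norm (exp (2 * rate * s) *\<^sub>R (v s - w s)))"
  proof -
    have "norm (candidate y v s - candidate y w s) \<le>
        C * norm ((y s - exp (2 * rate * s) *\<^sub>R v s) - (y s - exp (2 * rate * s) *\<^sub>R w s))"
      using lipschitz_onD[OF lipschitz_Phi, of "y s - exp (2 * rate * s) *\<^sub>R v s"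
          "y s - exp (2 * rate * s) *\<^sub>R w s"]
      unfolding candidate_def by (simp add: dist_norm)
    also have "(y s - exp (2 * rate * s) *\<^sub>R v s) - (y s - exp (2 * rate * s) *\<^sub>R w s)
        = - (exp (2 * rate * s) *\<^sub>R (v s - w s))"
      by (simp add: algebra_simps)
    finally have "norm (candidate y v s - candidate y w s) \<le> C * norm (exp (2 * rate * s) *\<^sub>R (v s - w s))"
      by (simp only: norm_minus_cancel)
    then show ?thesis
      using L_nonneg by (rule mult_left_mono)
  qed
  also have "\<dots> \<le> L * (C * (exp (2 * rate * s) * dist v w))"
    using dist_bounded[of v s w] L_nonneg C_nonneg
    by (intro mult_left_mono) (auto simp: dist_norm)
  finally show ?thesis
    by (simp add: algebra_simps)
qed

lemma picard_contraction:
  assumes y: "cadlag_on 0 T y"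
  shows "dist (picard y v) (picard y w) \<le> 1/2 * dist v w"
proof (rule dist_bound)
  fix t
  define r where "r = clamp 0 T t"
  define D where "D = dist v w"
  have r: "r \<in> {0..T}"
    unfolding r_def by (rule clamp_in_interval_real)
  have integrable: "(\<lambda>s. h (candidate y u s)) integrable_on {0..r}" for u
    using integrable_h_comp[OF cadlag_on_candidate[OF y] r] .
  have "norm (integral {0..r} (\<lambda>s. h (candidate y v s)) - integral {0..r} (\<lambda>s. h (candidate y w s)))
        = norm (integral {0..r} (\<lambda>s. h (candidate y v s) - h (candidate y w s)))"
    using integral_diff[OF integrable integrable] by simp
  also have "\<dots> \<le> integral {0..r} (\<lambda>s. L * C * D * exp (2 * rate * s))"
  proof (rule integral_norm_bound_integral)
    show "(\<lambda>s. h (candidate y v s) - h (candidate y w s)) integrable_on {0..r}"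
      using integrable integrable by (rule integrable_diff)
    show "(\<lambda>s. L * C * D * exp (2 * rate * s)) integrable_on {0..r}"
      using has_integral_mult_right[OF has_integral_exp_scaled[of "2 * rate" r]] rate_pos r
      by (auto simp: integrable_on_def)
  qed (unfold D_def, rule h_candidate_diff_le)
  also have "\<dots> = L * C * D * ((exp (2 * rate * r) - 1) / (2 * rate))"
    using rate_pos r by (intro integral_unique has_integral_mult_right has_integral_exp_scaled) auto
  also have "\<dots> \<le> L * C * D * (exp (2 * rate * r) / (2 * rate))"
    using L_nonneg C_nonneg rate_pos unfolding D_def by (intro mult_left_mono divide_right_mono) auto
  finally have diff: "norm (integral {0..r} (\<lambda>s. h (candidate y v s)) - integral {0..r} (\<lambda>s. h (candidate y w s)))
      \<le> L * C * D * (exp (2 * rate * r) / (2 * rate))" .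
  have "dist (picard y v t) (picard y w t) =
      exp (-(2 * rate * r)) * norm (integral {0..r} (\<lambda>s. h (candidate y v s)) - integral {0..r} (\<lambda>s. h (candidate y w s)))"
    unfolding picard_apply[OF y] weighted_integral_def r_def[symmetric] dist_norm
    by (metis abs_of_pos exp_gt_zero norm_scaleR scaleR_right_diff_distrib)
  also have "\<dots> \<le> exp (-(2 * rate * r)) * (L * C * D * (exp (2 * rate * r) / (2 * rate)))"
    using diff by (intro mult_left_mono) auto
  also have "\<dots> = L * C * D / (2 * rate)"
    using rate_pos by (simp add: field_simps exp_minus_inverse)
  also have "\<dots> \<le> 1/2 * D"
  proof -
    have "L * C * D \<le> rate * D"
      unfolding rate_def D_def by (simp add: mult_right_mono)
    then show ?thesis
      using rate_pos by (simp add: field_simps)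
  qed
  finally show "dist (picard y v t) (picard y w t) \<le> 1/2 * dist v w"
    unfolding D_def .
qed

lemma solution_exists:
  assumes y: "cadlag_on 0 T y"
  shows "\<exists>x. cadlag_on 0 T x \<and> solves x y"
proof -
  obtain v where v: "picard y v = v"
    using banach_fix_type[of "1/2" "picard y"] picard_contraction[OF y] by auto
  have "candidate y v t = Phi (y t - integral {0..t} (\<lambda>s. h (candidate y v s)))" if t: "t \<in> {0..T}" for t
  proof -
    have "v t = exp (-(2 * rate * t)) *\<^sub>R integral {0..t} (\<lambda>s. h (candidate y v s))"
      using picard_apply[OF y, of v t] t T_nonneg unfolding v weighted_integral_def by simp
    then have "exp (2 * rate * t) *\<^sub>R v t = integral {0..t} (\<lambda>s. h (candidate y v s))"
      by (simp add: exp_minus_inverse)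
    then show ?thesis
      unfolding candidate_def by simp
  qed
  then show ?thesis
    using cadlag_on_candidate[OF y] unfolding solves_def by blast
qed

end

locale min_shift_equation =
  lipschitz_integral_equation shift_by_min h "1 + norm (\<chi> j. 1 :: real^'k)" L T
  for h :: "real^'k \<Rightarrow> real^'k" and L T :: real
begin

lemma solves_eq_iff_solves: "cadlag T x \<Longrightarrow> solves_eq T h x y \<longleftrightarrow> solves x y"
  using solves_eq_iff_shift_by_min integrable_h_comp
  unfolding solves_def cadlag_iff_cadlag_on by blast

lemma solves_eq_unique_existence:
  assumes "cadlag T y"
  shows "\<exists>x. cadlag T x \<and> solves_eq T h x y \<and>
           (\<forall>x'. cadlag T x' \<and> solves_eq T h x' y \<longrightarrow> (\<forall>t\<in>{0..T}. x' t = x t))"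
proof -
  obtain x where x: "cadlag_on 0 T x" "solves x y"
    using solution_exists assms unfolding cadlag_iff_cadlag_on by blast
  then have "cadlag T x" "solves_eq T h x y"
    using solves_eq_iff_solves unfolding cadlag_iff_cadlag_on by auto
  moreover have "x' t = x t" if "cadlag T x'" "solves_eq T h x' y" "t \<in> {0..T}" for x' t
    using solution_unique[OF x] that solves_eq_iff_solves unfolding cadlag_iff_cadlag_on by blast
  ultimately show ?thesis
    by blast
qed

lemma solves_eq_continuous_dependence:
  assumes f: "\<forall>y. cadlag T y \<longrightarrow> cadlag T (f y) \<and> solves_eq T h (f y) y"
    and "cadlag T y" "\<epsilon> > 0"
  shows "\<exists>\<delta>>0. \<forall>y'. cadlag T y' \<and> (\<forall>t\<in>{0..T}. norm (y' t - y t) \<le> \<delta>) \<longrightarrow>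
           (\<forall>t\<in>{0..T}. norm (f y' t - f y t) \<le> \<epsilon>)"
proof -
  have f': "cadlag_on 0 T (f y) \<and> solves (f y) y" if "cadlag T y" for y
    using f that solves_eq_iff_solves unfolding cadlag_iff_cadlag_on by blast
  obtain \<delta> where "\<delta> > 0" and \<delta>: "\<And>x y x' y' t. cadlag_on 0 T x \<Longrightarrow> solves x y \<Longrightarrow>
      cadlag_on 0 T x' \<Longrightarrow> solves x' y' \<Longrightarrow> \<forall>s\<in>{0..T}. norm (y' s - y s) \<le> \<delta> \<Longrightarrow>
      t \<in> {0..T} \<Longrightarrow> norm (x' t - x t) \<le> \<epsilon>"
    using solution_continuous_dependence[OF \<open>\<epsilon> > 0\<close>] by blast
  show ?thesis
    using f'[OF \<open>cadlag T y\<close>] f' \<delta> \<open>\<delta> > 0\<close> by blast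
qed

end

theorem theorem2:
  fixes T :: real and h :: "real^'k \<Rightarrow> real^'k"
  assumes "T > 0" and "CARD('k) \<ge> 2"
    and "\<exists>L. lipschitz_on L UNIV h"
  shows "(\<forall>y. cadlag T y \<longrightarrow>
            (\<exists>x. cadlag T x \<and> solves_eq T h x y \<and>
               (\<forall>x'. cadlag T x' \<and> solves_eq T h x' y \<longrightarrow> (\<forall>t\<in>{0..T}. x' t = x t))))
       \<and> (\<forall>f. (\<forall>y. cadlag T y \<longrightarrow> cadlag T (f y) \<and> solves_eq T h (f y) y) \<longrightarrow>
            (\<forall>y. cadlag T y \<longrightarrow> (\<forall>\<epsilon>>0. \<exists>\<delta>>0. \<forall>y'. cadlag T y' \<and>
               (\<forall>t\<in>{0..T}. norm (y' t - y t) \<le> \<delta>) \<longrightarrow>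
               (\<forall>t\<in>{0..T}. norm (f y' t - f y t) \<le> \<epsilon>))))"
proof -
  obtain L where "lipschitz_on L UNIV h"
    using assms(3) by blast
  then interpret min_shift_equation h L T
    using lipschitz_on_shift_by_min assms(1) by unfold_locales auto
  show ?thesis
    using solves_eq_unique_existence solves_eq_continuous_dependence by blast
qed

end
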